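(* Let $(\mathcal{R},\mu)$ be resonant, let $\|\cdot\|_X$ be an r.i. quasi-Banach function norm on $\mathcal{M}(\mathcal{R},\mu)$ satisfying (P5), and let $\|\cdot\|_{\overline{X}}$ be the r.i. quasi-Banach function norm on $\mathcal{M}([0,\infty),\lambda)$ constructed as in the context (it also satisfies (P5)). Denote by $\|\cdot\|_{X'}$ and $\|\cdot\|_{(\overline{X})'}$ the associate norms of $\|\cdot\|_X$ and $\|\cdot\|_{\overline{X}}$, respectively. Then for every $f\in\mathcal{M}(\mathcal{R},\mu)$, $$\|f\|_{X'}=\|f^*\|_{(\overline{X})'}.$$
   Context: Let $(\mathcal{R},\mu)$ be a $\sigma$-finite measure space; $\mathcal{M}$ denotes the $\mu$-measurable extended complex-valued functions (identified a.e.), $\mathcal{M}_+$ the non-negative ones. $f_*(s)=\mu(\{|f|>s\})$, $f^*(t)=\inf\{s\ge0;\,f_*(s)\le t\}$ (non-increasing rearrangement). $(\mathcal{R},\mu)$ is called resonant if it is either non-atomic or completely atomic with all atoms of equal measure. A quasi-Banach function norm is a map $\|\cdot\|:\mathcal{M}\to[0,\infty]$ with $\|f\|=\||f|\|$ such that on $\mathcal{M}_+$: (Q1) $\|af\|=|a|\|f\|$, $\|f\|=0\iff f=0$ a.e., and there is $C\ge1$ (modulus of concavity) with $\|f+g\|\le C(\|f\|+\|g\|)$; (P2) $f\le g$ a.e. implies $\|f\|\le\|g\|$; (P3) $f_n\uparrow f$ a.e. implies $\|f_n\|\uparrow\|f\|$; (P4) $\|\chi_E\|<\infty$ whenever $\mu(E)<\infty$.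 Property (P5): for every $E$ with $\mu(E)<\infty$ there is $C_E<\infty$ with $\int_E f\,d\mu\le C_E\|f\|$ for all $f\in\mathcal{M}_+$. The norm is rearrangement-invariant (r.i.) if $\|f\|=\|g\|$ whenever $f^*=g^*$. For an r.i. quasi-Banach function norm $\|\cdot\|_X$ satisfying (P5), its associate norm is $\|f\|_{X'}=\sup\{\int_0^\infty f^*g^*\,d\lambda;\ \|g\|_X\le1\}$. Construction of $\|\cdot\|_{\overline{X}}$: (i) If $(\mathcal{R},\mu)$ is non-atomic, fix a measure-preserving map $\sigma$ from $(\mathcal{R},\mu)$ onto $[0,\mu(\mathcal{R}))$ (with Lebesgue measure $\lambda$), and for $h\in\mathcal{M}([0,\mu(\mathcal{R})),\lambda)$ put $\|h\|_{\overline{X_0}}=\|h\circ\sigma\|_X$. (ii) If $(\mathcal{R},\mu)$ is completely atomic with all atoms of measure $\beta\in(0,\infty)$, fix an enumeration $(e_n)_{n\in\mathcal{N}}$ of the atoms, $\mathcal{N}=\{n\in\mathbb{N};\,\beta n<\mu(\mathcal{R})\}$ ($0\in\mathbb{N}$), define $T(h)(e_n)=\beta^{-1}\int_{\beta n}^{\beta(n+1)}h^*\,d\lambda$ for $n\in\mathcal{N}$, and put $\|h\|_{\overline{X_0}}=\|T(h)\|_X$. In both cases define, for $f\in\mathcal{M}([0,\infty),\lambda)$, $\|f\|_{\overline{X}}=\|f^*\chi_{[0,\mu(\mathcal{R}))}\|_{\overline{X_0}}$. *)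

theory Defs
  imports "HOL-Analysis.Analysis"
begin

text \<open>Functions are represented through their modulus |f| :: 'a => ennreal
  (the norms only depend on |f|).\<close>

definition distrib :: "'a measure \<Rightarrow> ('a \<Rightarrow> ennreal) \<Rightarrow> ennreal \<Rightarrow> ennreal" where
  "distrib M f s = emeasure M {x \<in> space M. f x > s}"

definition rearr :: "'a measure \<Rightarrow> ('a \<Rightarrow> ennreal) \<Rightarrow> real \<Rightarrow> ennreal" where
  "rearr M f t = Inf {s. distrib M f s \<le> ennreal t}"

definition halfline :: "real measure" where
  "halfline = lebesgue_on {0..}"

definition qBFN :: "'a measure \<Rightarrow> (('a \<Rightarrow> ennreal) \<Rightarrow> ennreal) \<Rightarrow> bool" where
  "qBFN M N \<longleftrightarrow>
     \<comment> \<open>(Q1)\<close>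
     (\<forall>f \<in> borel_measurable M. \<forall>a::real. a \<ge> 0 \<longrightarrow> N (\<lambda>x. ennreal a * f x) = ennreal a * N f) \<and>
     (\<forall>f \<in> borel_measurable M. N f = 0 \<longleftrightarrow> (AE x in M. f x = 0)) \<and>
     (\<exists>C::real. C \<ge> 1 \<and> (\<forall>f \<in> borel_measurable M. \<forall>g \<in> borel_measurable M.
         N (\<lambda>x. f x + g x) \<le> ennreal C * (N f + N g))) \<and>
     \<comment> \<open>(P2)\<close>
     (\<forall>f \<in> borel_measurable M. \<forall>g \<in> borel_measurable M.
         (AE x in M. f x \<le> g x) \<longrightarrow> N f \<le> N g) \<and>
     \<comment> \<open>(P3)\<close>
     (\<forall>F f. (\<forall>n. F n \<in> borel_measurable M) \<longrightarrow> f \<in> borel_measurable M \<longrightarrow>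
         (AE x in M. incseq (\<lambda>n. F n x) \<and> (\<lambda>n. F n x) \<longlonglongrightarrow> f x) \<longrightarrow>
         incseq (\<lambda>n. N (F n)) \<and> (\<lambda>n. N (F n)) \<longlonglongrightarrow> N f) \<and>
     \<comment> \<open>(P4)\<close>
     (\<forall>E \<in> sets M. emeasure M E < \<infinity> \<longrightarrow> N (indicator E) < \<infinity>)"

definition P5 :: "'a measure \<Rightarrow> (('a \<Rightarrow> ennreal) \<Rightarrow> ennreal) \<Rightarrow> bool" where
  "P5 M N \<longleftrightarrow> (\<forall>E \<in> sets M. emeasure M E < \<infinity> \<longrightarrow>
     (\<exists>C::real. \<forall>f \<in> borel_measurable M. (\<integral>\<^sup>+x\<in>E. f x \<partial>M) \<le> ennreal C * N f))"

definition rearr_inv :: "'a measure \<Rightarrow> (('a \<Rightarrow> ennreal) \<Rightarrow> ennreal) \<Rightarrow> bool" where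
  "rearr_inv M N \<longleftrightarrow> (\<forall>f \<in> borel_measurable M. \<forall>g \<in> borel_measurable M.
     (\<forall>t\<ge>0. rearr M f t = rearr M g t) \<longrightarrow> N f = N g)"

definition assoc_norm :: "'a measure \<Rightarrow> (('a \<Rightarrow> ennreal) \<Rightarrow> ennreal) \<Rightarrow> ('a \<Rightarrow> ennreal) \<Rightarrow> ennreal" where
  "assoc_norm M N f = (SUP g \<in> {g \<in> borel_measurable M. N g \<le> 1}.
       \<integral>\<^sup>+t. rearr M f t * rearr M g t \<partial>halfline)"

definition atom :: "'a measure \<Rightarrow> 'a set \<Rightarrow> bool" where
  "atom M A \<longleftrightarrow> A \<in> sets M \<and> emeasure M A > 0 \<and>
     (\<forall>B \<in> sets M. B \<subseteq> A \<longrightarrow> emeasure M B = 0 \<or> emeasure M (A - B) = 0)"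

definition non_atomic :: "'a measure \<Rightarrow> bool" where
  "non_atomic M \<longleftrightarrow> \<not> (\<exists>A. atom M A)"

definition range_int :: "'a measure \<Rightarrow> real set" where
  "range_int M = {t. 0 \<le> t \<and> ennreal t < emeasure M (space M)}"

definition meas_pres_onto :: "'a measure \<Rightarrow> ('a \<Rightarrow> real) \<Rightarrow> bool" where
  "meas_pres_onto M \<sigma> \<longleftrightarrow> \<sigma> ` space M = range_int M \<and>
     (\<forall>E \<in> sets (lebesgue_on (range_int M)).
        \<sigma> -` E \<inter> space M \<in> sets M \<and> emeasure M (\<sigma> -` E \<inter> space M) = emeasure lebesgue E)"

definition atom_index :: "'a measure \<Rightarrow> real \<Rightarrow> nat set" where
  "atom_index M \<beta> = {n. ennreal (\<beta> * real n) < emeasure M (space M)}"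

definition atom_enum :: "'a measure \<Rightarrow> real \<Rightarrow> (nat \<Rightarrow> 'a set) \<Rightarrow> bool" where
  "atom_enum M \<beta> e \<longleftrightarrow> 0 < \<beta> \<and>
     (\<forall>n \<in> atom_index M \<beta>. atom M (e n) \<and> emeasure M (e n) = ennreal \<beta>) \<and>
     disjoint_family_on e (atom_index M \<beta>) \<and>
     (\<Union>n \<in> atom_index M \<beta>. e n) = space M"

definition Xbar_nonatomic ::
  "'a measure \<Rightarrow> (('a \<Rightarrow> ennreal) \<Rightarrow> ennreal) \<Rightarrow> ('a \<Rightarrow> real) \<Rightarrow> (real \<Rightarrow> ennreal) \<Rightarrow> ennreal" where
  "Xbar_nonatomic M N \<sigma> f =
     N (\<lambda>x. rearr halfline f (\<sigma> x) * indicator (range_int M) (\<sigma> x))"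

definition T_op :: "'a measure \<Rightarrow> real \<Rightarrow> (nat \<Rightarrow> 'a set) \<Rightarrow> (real \<Rightarrow> ennreal) \<Rightarrow> 'a \<Rightarrow> ennreal" where
  "T_op M \<beta> e h x = (\<Sum>n. (if n \<in> atom_index M \<beta> then indicator (e n) x else 0) *
       (ennreal (1 / \<beta>) * (\<integral>\<^sup>+t\<in>{\<beta> * real n ..< \<beta> * real (Suc n)}.
           rearr (lebesgue_on (range_int M)) h t \<partial>lebesgue)))"

definition Xbar_atomic ::
  "'a measure \<Rightarrow> (('a \<Rightarrow> ennreal) \<Rightarrow> ennreal) \<Rightarrow> real \<Rightarrow> (nat \<Rightarrow> 'a set) \<Rightarrow> (real \<Rightarrow> ennreal) \<Rightarrow> ennreal" where
  "Xbar_atomic M N \<beta> e f =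
     N (T_op M \<beta> e (\<lambda>t. rearr halfline f t * indicator (range_int M) t))"

end

theory Submission
  imports Defs
begin

(*
  Both associate norms are suprema of the pairing \<integral> f^* g^* over unit balls, so it suffices to
  match the two unit balls without changing the pairing. The construction of X-bar comes with a
  transfer map \<Phi> from functions on [0,\<infinity>) to functions on R, namely h \<mapsto> h^* \<chi> \<circ> \<sigma> in the
  non-atomic case and h \<mapsto> T(h^* \<chi>) in the atomic case, for which \<parallel>h\<parallel>_X-bar = \<parallel>\<Phi> h\<parallel>_X.
  For g on R, \<Phi> g^* is equimeasurable with g: in the atomic case all distribution values are
  multiples of the atom size \<beta>, hence g^* is constant on the intervals [\<beta>n, \<beta>(n+1)).
  Conversely, the rearrangement of \<Phi> h agrees with h^* on [0,\<mu>(R)) in the non-atomic case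
  and is the step function of the interval averages of h^* in the atomic case. Since f^* vanishes
  beyond \<mu>(R) and is constant on those intervals, replacing h^* by the rearrangement of \<Phi> h
  leaves \<integral> f^* h^* unchanged.
*)

section \<open>Distribution function and rearrangement\<close>

lemma distrib_antimono:
  assumes f: "f \<in> borel_measurable M" and "s \<le> s'"
  shows "distrib M f s' \<le> distrib M f s"
  unfolding distrib_def
  by (rule emeasure_mono) (use assms in \<open>auto intro: order.strict_trans1\<close>)

lemma distrib_le_emeasure_space: "distrib M f s \<le> emeasure M (space M)"
  unfolding distrib_def by (rule emeasure_space)

lemma distrib_le_if_greater:
  assumes f: "f \<in> borel_measurable M" and le: "\<And>s'. s < s' \<Longrightarrow> distrib M f s' \<le> c"
  shows "distrib M f s \<le> c"
proof (cases "s = \<infinity>")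
  case True
  then show ?thesis by (simp add: distrib_def)
next
  case False
  define u where "u n = s + ennreal (1 / Suc n)" for n
  define A where "A n = {x \<in> space M. u n < f x}" for n
  have s_less_u: "s < u n" for n
    using False ennreal_add_left_cancel_less[of s 0] by (simp add: u_def)
  have "u \<longlonglongrightarrow> s + ennreal 0"
    unfolding u_def using LIMSEQ_inverse_real_of_nat
    by (intro tendsto_add tendsto_const tendsto_ennrealI) (simp add: inverse_eq_divide)
  then have u_lim: "u \<longlonglongrightarrow> s" by simp
  have "u n \<le> u m" if "m \<le> n" for m n
    unfolding u_def using that by (auto intro!: add_left_mono ennreal_leI frac_le)
  then have "incseq A"
    unfolding incseq_def A_def by (auto intro: order.strict_trans1)
  moreover have "range A \<subseteq> sets M" unfolding A_def using f by auto
  moreover have "(\<Union>n. A n) = {x \<in> space M. s < f x}"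
  proof
    show "(\<Union>n. A n) \<subseteq> {x \<in> space M. s < f x}"
      unfolding A_def using s_less_u by (auto intro: order.strict_trans)
    show "{x \<in> space M. s < f x} \<subseteq> (\<Union>n. A n)"
    proof
      fix x assume x: "x \<in> {x \<in> space M. s < f x}"
      then obtain n where "u n < f x"
        using order_tendstoD(2)[OF u_lim] eventually_sequentially by force
      then show "x \<in> (\<Union>n. A n)" using x unfolding A_def by auto
    qed
  qed
  ultimately have "distrib M f s = (SUP n. emeasure M (A n))"
    unfolding distrib_def by (metis SUP_emeasure_incseq)
  also have "\<dots> \<le> c"
    using le[OF s_less_u] by (auto simp: A_def distrib_def intro: SUP_least)
  finally show ?thesis .
qed

lemma rearr_le_iff:
  assumes f: "f \<in> borel_measurable M"
  shows "rearr M f t \<le> s \<longleftrightarrow> distrib M f s \<le> ennreal t"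
proof
  assume le: "rearr M f t \<le> s"
  show "distrib M f s \<le> ennreal t"
  proof (rule distrib_le_if_greater[OF f])
    fix s' assume "s < s'"
    with le have "rearr M f t < s'" by (rule order.strict_trans1)
    then obtain r where r: "distrib M f r \<le> ennreal t" "r < s'"
      unfolding rearr_def by (auto simp: Inf_less_iff)
    have "distrib M f s' \<le> distrib M f r"
      using r(2) by (intro distrib_antimono[OF f]) simp
    then show "distrib M f s' \<le> ennreal t" using r(1) by (rule order.trans)
  qed
qed (auto simp: rearr_def intro: Inf_lower)

lemma rearr_less_iff:
  assumes f: "f \<in> borel_measurable M"
  shows "s < rearr M f t \<longleftrightarrow> ennreal t < distrib M f s"
  using rearr_le_iff[OF f, of t s] by auto

lemma rearr_antimono: "t \<le> t' \<Longrightarrow> rearr M f t' \<le> rearr M f t"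
  unfolding rearr_def by (rule Inf_superset_mono) (auto intro: order.trans ennreal_leI)

lemma rearr_eq_0:
  assumes f: "f \<in> borel_measurable M" and "emeasure M (space M) \<le> ennreal t"
  shows "rearr M f t = 0"
  using rearr_le_iff[OF f, of t 0] distrib_le_emeasure_space[of M f 0] assms(2) by auto

lemma rearr_eq_if_distrib_eq_min:
  assumes f: "f \<in> borel_measurable M" and g: "g \<in> borel_measurable M'"
    and distr: "\<And>s. distrib M f s = min (distrib M' g s) c" and t: "ennreal t < c"
  shows "rearr M f t = rearr M' g t"
proof -
  have "rearr M f t \<le> s \<longleftrightarrow> rearr M' g t \<le> s" for s
    unfolding rearr_le_iff[OF f] rearr_le_iff[OF g] distr using t by (auto simp: min_le_iff_disj)
  then show ?thesis by (metis order.antisym order.refl)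
qed

lemma borel_measurable_rearr:
  assumes f: "f \<in> borel_measurable M"
  shows "rearr M f \<in> borel_measurable borel"
proof (rule borel_measurableI_greater)
  fix s
  have "{t \<in> space borel. s < rearr M f t} = {t. ennreal t < distrib M f s}"
    using rearr_less_iff[OF f] by auto
  also have "\<dots> \<in> sets borel"
    by (intro borel_open open_Collect_less continuous_intros continuous_on_ennreal[OF continuous_on_id])
  finally show "{t \<in> space borel. s < rearr M f t} \<in> sets borel" .
qed

lemma borel_measurable_rearr_lebesgue:
  "f \<in> borel_measurable M \<Longrightarrow> rearr M f \<in> borel_measurable lebesgue"
  using borel_measurable_rearr[of f M] by (simp add: measurable_completion)

lemma borel_measurable_rearr_lebesgue_on:
  "f \<in> borel_measurable M \<Longrightarrow> rearr M f \<in> borel_measurable (lebesgue_on S)"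
  by (rule measurable_restrict_space1[OF borel_measurable_rearr_lebesgue])

lemma borel_measurable_rearr_halfline:
  "f \<in> borel_measurable M \<Longrightarrow> rearr M f \<in> borel_measurable halfline"
  unfolding halfline_def by (rule borel_measurable_rearr_lebesgue_on)

lemma emeasure_lborel_atLeast: "emeasure lborel {a::real..} = \<infinity>"
proof -
  have "of_nat n \<le> emeasure lborel {a::real..}" for n
  proof -
    have "emeasure lborel {a::real..<a + real n} \<le> emeasure lborel {a..}"
      by (rule emeasure_mono) auto
    then show ?thesis by (simp add: ennreal_of_nat_eq_real_of_nat)
  qed
  then have "(SUP n. of_nat n) \<le> emeasure lborel {a::real..}" by (rule SUP_least)
  then show ?thesis by (simp add: ennreal_SUP_of_nat_eq_top top_unique)
qed

lemma ennreal_less_set_eq: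
  "{t::real. 0 \<le> t \<and> ennreal t < c} = (if c = \<infinity> then {0..} else {0..<enn2real c})"
  by (cases c rule: ennreal_cases) (auto simp: ennreal_less_iff)

lemma ennreal_less_set_borel[measurable]: "{t::real. 0 \<le> t \<and> ennreal t < c} \<in> sets borel"
  unfolding ennreal_less_set_eq by auto

lemma emeasure_ennreal_less_set: "emeasure lebesgue {t::real. 0 \<le> t \<and> ennreal t < c} = c"
proof -
  have "emeasure lborel {t::real. 0 \<le> t \<and> ennreal t < c} = c"
    unfolding ennreal_less_set_eq using emeasure_lborel_atLeast[of 0]
    by (cases c rule: ennreal_cases) auto
  then show ?thesis by simp
qed

lemma distrib_rearr:
  assumes f: "f \<in> borel_measurable M"
  shows "distrib halfline (rearr M f) s = distrib M f s"
proof -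
  have "distrib halfline (rearr M f) s = emeasure lebesgue {t. 0 \<le> t \<and> s < rearr M f t}"
    unfolding distrib_def halfline_def by (subst emeasure_restrict_space) auto
  also have "{t. 0 \<le> t \<and> s < rearr M f t} = {t. 0 \<le> t \<and> ennreal t < distrib M f s}"
    using rearr_less_iff[OF f] by auto
  finally show ?thesis by (simp add: emeasure_ennreal_less_set)
qed

lemma rearr_rearr:
  assumes f: "f \<in> borel_measurable M"
  shows "rearr halfline (rearr M f) = rearr M f"
proof
  fix t
  show "rearr halfline (rearr M f) t = rearr M f t"
    unfolding rearr_def[of halfline] distrib_rearr[OF f] rearr_def[of M] ..
qed

section \<open>Truncated rearrangement and transfer of the associate norm\<close>

definition rearr_trunc :: "'a measure \<Rightarrow> (real \<Rightarrow> ennreal) \<Rightarrow> real \<Rightarrow> ennreal" where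
  "rearr_trunc M G = (\<lambda>t. rearr halfline G t * indicator (range_int M) t)"

lemma range_int_sets_lebesgue: "range_int M \<in> sets lebesgue"
  unfolding range_int_def using ennreal_less_set_borel by simp

lemma Collect_less_rearr_trunc:
  assumes G: "G \<in> borel_measurable halfline"
  shows "{t. s < rearr_trunc M G t} =
    {t. 0 \<le> t \<and> ennreal t < min (distrib halfline G s) (emeasure M (space M))}"
  using rearr_less_iff[OF G] by (auto simp: rearr_trunc_def range_int_def indicator_def)

lemma
  assumes G: "G \<in> borel_measurable halfline"
  shows borel_measurable_rearr_trunc: "rearr_trunc M G \<in> borel_measurable (lebesgue_on (range_int M))"
    and distrib_rearr_trunc: "distrib (lebesgue_on (range_int M)) (rearr_trunc M G) s =
      min (distrib halfline G s) (emeasure M (space M))"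
proof -
  show "rearr_trunc M G \<in> borel_measurable (lebesgue_on (range_int M))"
    unfolding rearr_trunc_def
    by (intro borel_measurable_times_ennreal borel_measurable_rearr_lebesgue_on[OF G]
        borel_measurable_indicator) simp
  have sub: "{t. s < rearr_trunc M G t} \<subseteq> range_int M"
    by (auto simp: rearr_trunc_def indicator_def split: if_splits)
  then have "{t \<in> space (lebesgue_on (range_int M)). s < rearr_trunc M G t} = {t. s < rearr_trunc M G t}"
    by auto
  then have "distrib (lebesgue_on (range_int M)) (rearr_trunc M G) s =
      emeasure (lebesgue_on (range_int M)) {t. s < rearr_trunc M G t}"
    unfolding distrib_def by (simp only:)
  also have "\<dots> = emeasure lebesgue {t. s < rearr_trunc M G t}"
    using range_int_sets_lebesgue sub by (intro emeasure_restrict_space) auto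
  also have "\<dots> = min (distrib halfline G s) (emeasure M (space M))"
    unfolding Collect_less_rearr_trunc[OF G] by (rule emeasure_ennreal_less_set)
  finally show "distrib (lebesgue_on (range_int M)) (rearr_trunc M G) s =
      min (distrib halfline G s) (emeasure M (space M))" .
qed

lemma assoc_norm_eq_by_transfer:
  assumes ri: "rearr_inv M N" and f: "f \<in> borel_measurable M"
    and \<Phi>_meas: "\<And>G. G \<in> borel_measurable halfline \<Longrightarrow> \<Phi> G \<in> borel_measurable M"
    and Nbar_eq: "\<And>G. G \<in> borel_measurable halfline \<Longrightarrow> Nbar G = N (\<Phi> G)"
    and \<Phi>_rearr: "\<And>g t. g \<in> borel_measurable M \<Longrightarrow> 0 \<le> t \<Longrightarrow>
      rearr M (\<Phi> (rearr M g)) t = rearr M g t"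
    and \<Phi>_pairing: "\<And>G. G \<in> borel_measurable halfline \<Longrightarrow>
      (\<integral>\<^sup>+t. rearr M f t * rearr halfline G t \<partial>halfline) =
      (\<integral>\<^sup>+t. rearr M f t * rearr M (\<Phi> G) t \<partial>halfline)"
  shows "assoc_norm M N f = assoc_norm halfline Nbar (rearr M f)"
  unfolding assoc_norm_def rearr_rearr[OF f]
proof (rule antisym; rule SUP_mono)
  fix g assume "g \<in> {g \<in> borel_measurable M. N g \<le> 1}"
  then have g: "g \<in> borel_measurable M" and "N g \<le> 1" by auto
  have g': "rearr M g \<in> borel_measurable halfline" by (rule borel_measurable_rearr_halfline[OF g])
  have "N (\<Phi> (rearr M g)) = N g"
    using ri \<Phi>_meas[OF g'] g \<Phi>_rearr[OF g] unfolding rearr_inv_def by blast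
  then have "Nbar (rearr M g) \<le> 1" using Nbar_eq[OF g'] \<open>N g \<le> 1\<close> by simp
  then show "\<exists>G \<in> {G \<in> borel_measurable halfline. Nbar G \<le> 1}.
      (\<integral>\<^sup>+t. rearr M f t * rearr M g t \<partial>halfline) \<le> (\<integral>\<^sup>+t. rearr M f t * rearr halfline G t \<partial>halfline)"
    using g' by (auto simp: rearr_rearr[OF g])
next
  fix G assume "G \<in> {G \<in> borel_measurable halfline. Nbar G \<le> 1}"
  then have G: "G \<in> borel_measurable halfline" and "Nbar G \<le> 1" by auto
  then show "\<exists>g \<in> {g \<in> borel_measurable M. N g \<le> 1}.
      (\<integral>\<^sup>+t. rearr M f t * rearr halfline G t \<partial>halfline) \<le> (\<integral>\<^sup>+t. rearr M f t * rearr M g t \<partial>halfline)"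
    using \<Phi>_meas[OF G] Nbar_eq[OF G] \<Phi>_pairing[OF G] by (intro bexI[of _ "\<Phi> G"]) auto
qed

section \<open>Non-atomic spaces\<close>

lemma
  assumes \<sigma>: "meas_pres_onto M \<sigma>" and G: "G \<in> borel_measurable halfline"
  shows measurable_rearr_trunc_comp: "(\<lambda>x. rearr_trunc M G (\<sigma> x)) \<in> borel_measurable M"
    and distrib_rearr_trunc_comp:
      "distrib M (\<lambda>x. rearr_trunc M G (\<sigma> x)) s = min (distrib halfline G s) (emeasure M (space M))"
proof -
  define E where "E s = {t. 0 \<le> t \<and> ennreal t < min (distrib halfline G s) (emeasure M (space M))}"
    for s
  have "E s \<in> sets (lebesgue_on (range_int M))" for s
    using range_int_sets_lebesgue ennreal_less_set_borel
    by (subst sets_restrict_space_iff) (auto simp: E_def range_int_def)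
  then have E: "\<sigma> -` E s \<inter> space M \<in> sets M" "emeasure M (\<sigma> -` E s \<inter> space M) = emeasure lebesgue (E s)"
    for s using \<sigma> unfolding meas_pres_onto_def by blast+
  have level_set: "{x \<in> space M. s < rearr_trunc M G (\<sigma> x)} = \<sigma> -` E s \<inter> space M" for s
    using Collect_less_rearr_trunc[OF G, of s M] unfolding E_def by blast
  show "(\<lambda>x. rearr_trunc M G (\<sigma> x)) \<in> borel_measurable M"
    by (rule borel_measurableI_greater) (simp add: level_set E)
  show "distrib M (\<lambda>x. rearr_trunc M G (\<sigma> x)) s = min (distrib halfline G s) (emeasure M (space M))"
    unfolding distrib_def[of M] level_set E(2) unfolding E_def by (rule emeasure_ennreal_less_set)
qed

lemma assoc_norm_nonatomic:
  assumes ri: "rearr_inv M N" and \<sigma>: "meas_pres_onto M \<sigma>" and f: "f \<in> borel_measurable M"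
  shows "assoc_norm M N f = assoc_norm halfline (Xbar_nonatomic M N \<sigma>) (rearr M f)"
proof (rule assoc_norm_eq_by_transfer[where \<Phi> = "\<lambda>G x. rearr_trunc M G (\<sigma> x)", OF ri f])
  fix G :: "real \<Rightarrow> ennreal"
  assume G: "G \<in> borel_measurable halfline"
  show "(\<lambda>x. rearr_trunc M G (\<sigma> x)) \<in> borel_measurable M"
    by (rule measurable_rearr_trunc_comp[OF \<sigma> G])
  show "Xbar_nonatomic M N \<sigma> G = N (\<lambda>x. rearr_trunc M G (\<sigma> x))"
    unfolding Xbar_nonatomic_def rearr_trunc_def ..
  have "rearr M f t * rearr halfline G t = rearr M f t * rearr M (\<lambda>x. rearr_trunc M G (\<sigma> x)) t" for t
  proof (cases "ennreal t < emeasure M (space M)")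
    case True
    then show ?thesis
      using rearr_eq_if_distrib_eq_min[OF measurable_rearr_trunc_comp[OF \<sigma> G] G
          distrib_rearr_trunc_comp[OF \<sigma> G]] by simp
  qed (simp add: rearr_eq_0[OF f])
  then show "(\<integral>\<^sup>+t. rearr M f t * rearr halfline G t \<partial>halfline) =
      (\<integral>\<^sup>+t. rearr M f t * rearr M (\<lambda>x. rearr_trunc M G (\<sigma> x)) t \<partial>halfline)"
    by simp
next
  fix g :: "'a \<Rightarrow> ennreal" and t :: real
  assume g: "g \<in> borel_measurable M"
  have "distrib M (\<lambda>x. rearr_trunc M (rearr M g) (\<sigma> x)) s = distrib M g s" for s
    using distrib_rearr_trunc_comp[OF \<sigma> borel_measurable_rearr_halfline[OF g]]
    by (simp add: distrib_rearr[OF g] distrib_le_emeasure_space min_absorb1)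
  then show "rearr M (\<lambda>x. rearr_trunc M (rearr M g) (\<sigma> x)) t = rearr M g t"
    unfolding rearr_def by simp
qed

section \<open>Completely atomic spaces\<close>

lemma atom_enumD:
  assumes "atom_enum M \<beta> e"
  shows "0 < \<beta>"
    and "\<And>n. n \<in> atom_index M \<beta> \<Longrightarrow> e n \<in> sets M"
    and "\<And>n. n \<in> atom_index M \<beta> \<Longrightarrow> emeasure M (e n) = ennreal \<beta>"
    and "\<And>n. n \<in> atom_index M \<beta> \<Longrightarrow> atom M (e n)"
    and "disjoint_family_on e (atom_index M \<beta>)"
    and "(\<Union>n \<in> atom_index M \<beta>. e n) = space M"
  using assms by (auto simp: atom_enum_def atom_def)

lemma
  assumes ae: "atom_enum M \<beta> e" and J: "J \<subseteq> atom_index M \<beta>"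
  shows sets_UN_atoms: "(\<Union>n\<in>J. e n) \<in> sets M"
    and emeasure_UN_atoms: "emeasure M (\<Union>n\<in>J. e n) = ennreal \<beta> * emeasure (count_space UNIV) J"
proof -
  have e: "\<And>n. n \<in> J \<Longrightarrow> e n \<in> sets M" using atom_enumD(2)[OF ae] J by auto
  show "(\<Union>n\<in>J. e n) \<in> sets M" using e by (intro sets.countable_UN'') auto
  have "emeasure M (\<Union>n\<in>J. e n) = (\<integral>\<^sup>+n. emeasure M (e n) \<partial>count_space J)"
    using e disjoint_family_on_mono[OF J atom_enumD(5)[OF ae]]
    by (intro emeasure_UN_countable) auto
  also have "\<dots> = (\<integral>\<^sup>+n. ennreal \<beta> \<partial>count_space J)"
    by (rule nn_integral_cong) (use atom_enumD(3)[OF ae] J in auto)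
  also have "\<dots> = ennreal \<beta> * emeasure (count_space UNIV) J"
    by (simp add: nn_integral_const emeasure_count_space)
  finally show "emeasure M (\<Union>n\<in>J. e n) = ennreal \<beta> * emeasure (count_space UNIV) J" .
qed

lemma emeasure_subset_atom:
  assumes ae: "atom_enum M \<beta> e" and n: "n \<in> atom_index M \<beta>" and B: "B \<in> sets M" "B \<subseteq> e n"
  shows "emeasure M B = 0 \<or> emeasure M B = ennreal \<beta>"
proof -
  have "emeasure M B = 0 \<or> emeasure M (e n - B) = 0"
    using atom_enumD(4)[OF ae n] B unfolding atom_def by auto
  moreover have "emeasure M B = ennreal \<beta>" if "emeasure M (e n - B) = 0"
  proof -
    have "emeasure M (e n - (e n - B)) = emeasure M (e n)"
      using that atom_enumD(2)[OF ae n] B by (intro emeasure_Diff_null_set) auto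
    moreover have "e n - (e n - B) = B" using B by auto
    ultimately show ?thesis using atom_enumD(3)[OF ae n] by simp
  qed
  ultimately show ?thesis by blast
qed

lemma emeasure_atomic_eq:
  assumes ae: "atom_enum M \<beta> e" and A: "A \<in> sets M"
  shows "\<exists>J \<subseteq> atom_index M \<beta>. emeasure M A = ennreal \<beta> * emeasure (count_space UNIV) J"
proof -
  let ?I = "atom_index M \<beta>"
  define J where "J = {n \<in> ?I. emeasure M (A \<inter> e n) \<noteq> 0}"
  have J: "J \<subseteq> ?I" unfolding J_def by blast
  have A_UN: "A = (\<Union>n\<in>?I. A \<inter> e n)"
    using sets.sets_into_space[OF A] atom_enumD(6)[OF ae] by auto
  have disj: "disjoint_family_on (\<lambda>n. A \<inter> e n) ?I"
    using atom_enumD(5)[OF ae] unfolding disjoint_family_on_def by auto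
  have "emeasure M A = emeasure M (\<Union>n\<in>?I. A \<inter> e n)" using A_UN by (rule arg_cong)
  also have "\<dots> = (\<integral>\<^sup>+n. emeasure M (A \<inter> e n) \<partial>count_space ?I)"
    by (rule emeasure_UN_countable[OF _ _ disj]) (use A atom_enumD(2)[OF ae] in auto)
  also have "\<dots> = (\<integral>\<^sup>+n. ennreal \<beta> * indicator J n \<partial>count_space ?I)"
  proof (rule nn_integral_cong)
    fix n assume "n \<in> space (count_space ?I)"
    then have n: "n \<in> ?I" by simp
    have "emeasure M (A \<inter> e n) = 0 \<or> emeasure M (A \<inter> e n) = ennreal \<beta>"
      using A atom_enumD(2)[OF ae n] by (intro emeasure_subset_atom[OF ae n]) auto
    then show "emeasure M (A \<inter> e n) = ennreal \<beta> * indicator J n"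
      using n atom_enumD(1)[OF ae] unfolding J_def by (auto simp: indicator_def)
  qed
  also have "\<dots> = ennreal \<beta> * emeasure (count_space ?I) J"
    by (rule nn_integral_cmult_indicator) (use J in simp)
  also have "emeasure (count_space ?I) J = emeasure (count_space UNIV) J"
    using J by (simp add: emeasure_count_space)
  finally show ?thesis using J by blast
qed

lemma count_mult_le_iff:
  assumes b: "0 < \<beta>" and t: "\<beta> * real n \<le> t" "t < \<beta> * real (Suc n)"
  shows "ennreal \<beta> * emeasure (count_space UNIV) J \<le> ennreal t \<longleftrightarrow>
    emeasure (count_space UNIV) J \<le> of_nat n"
proof (cases "finite J")
  case True
  have "0 \<le> \<beta> * real n" using b by simp
  then have t0: "0 \<le> t" using t(1) by linarith
  have "\<beta> * real (card J) \<le> t \<longleftrightarrow> card J \<le> n"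
  proof
    assume "\<beta> * real (card J) \<le> t"
    then have "\<beta> * real (card J) < \<beta> * real (Suc n)" using t by linarith
    then show "card J \<le> n" using b by (simp add: mult_less_cancel_left_pos)
  next
    assume "card J \<le> n"
    then have "\<beta> * real (card J) \<le> \<beta> * real n" using b by simp
    then show "\<beta> * real (card J) \<le> t" using t by linarith
  qed
  moreover have "ennreal \<beta> * of_nat (card J) = ennreal (\<beta> * real (card J))"
    using b by (simp add: ennreal_of_nat_eq_real_of_nat ennreal_mult)
  ultimately show ?thesis
    using True t0 by (simp add: emeasure_count_space)
next
  case False
  then show ?thesis using b by (simp add: emeasure_count_space ennreal_mult_top top_unique)
qed

lemma count_le_iff_notin_down_closed:
  fixes J :: "nat set"
  assumes down: "\<And>i j. j \<in> J \<Longrightarrow> i \<le> j \<Longrightarrow> i \<in> J"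
  shows "emeasure (count_space UNIV) J \<le> of_nat n \<longleftrightarrow> n \<notin> J"
proof
  assume "n \<notin> J"
  have "J \<subseteq> {..<n}"
  proof
    fix k assume "k \<in> J"
    then show "k \<in> {..<n}" using down[of k n] \<open>n \<notin> J\<close> by (cases "n \<le> k") auto
  qed
  then have "emeasure (count_space UNIV) J \<le> emeasure (count_space UNIV) {..<n}"
    by (rule emeasure_mono) simp
  then show "emeasure (count_space UNIV) J \<le> of_nat n" by simp
next
  assume le: "emeasure (count_space UNIV) J \<le> of_nat n"
  show "n \<notin> J"
  proof
    assume "n \<in> J"
    then have "{..n} \<subseteq> J" using down by auto
    then have "emeasure (count_space UNIV) {..n} \<le> emeasure (count_space UNIV) J"
      by (rule emeasure_mono) simp
    then have "emeasure (count_space UNIV) {..n} \<le> of_nat n" using le by (rule order.trans)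
    then show False by (simp add: emeasure_count_space)
  qed
qed

lemma exists_interval_index:
  assumes b: "0 < (\<beta>::real)" and t: "0 \<le> t"
  shows "\<exists>n. \<beta> * real n \<le> t \<and> t < \<beta> * real (Suc n)"
proof -
  define n where "n = nat \<lfloor>t / \<beta>\<rfloor>"
  have "real n = of_int \<lfloor>t / \<beta>\<rfloor>" unfolding n_def using b t by simp
  then have "real n \<le> t / \<beta>" "t / \<beta> < real n + 1" by linarith+
  then show ?thesis using b by (auto simp: field_simps)
qed

lemma interval_index_unique:
  assumes b: "0 < (\<beta>::real)" and "\<beta> * real n \<le> t" "t < \<beta> * real (Suc n)"
    and "\<beta> * real k \<le> t" "t < \<beta> * real (Suc k)"
  shows "k = n"
proof -
  have "\<beta> * real n < \<beta> * real (Suc k)" "\<beta> * real k < \<beta> * real (Suc n)" using assms by linarith+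
  then show ?thesis using b by (simp add: mult_less_cancel_left_pos)
qed

(* All distribution values are multiples of \<beta>, so the rearrangement can only jump at multiples of \<beta>. *)
lemma rearr_atomic_eq_left_endpoint:
  assumes ae: "atom_enum M \<beta> e" and g: "g \<in> borel_measurable M"
    and t: "\<beta> * real n \<le> t" "t < \<beta> * real (Suc n)"
  shows "rearr M g t = rearr M g (\<beta> * real n)"
proof -
  have b: "0 < \<beta>" by (rule atom_enumD(1)[OF ae])
  have "rearr M g t \<le> s \<longleftrightarrow> rearr M g (\<beta> * real n) \<le> s" for s
  proof -
    have "{x \<in> space M. s < g x} \<in> sets M" using g by measurable
    then obtain J :: "nat set" where J: "distrib M g s = ennreal \<beta> * emeasure (count_space UNIV) J"
      unfolding distrib_def using emeasure_atomic_eq[OF ae] by blast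
    have "\<beta> * real n < \<beta> * real (Suc n)" using b by simp
    then show ?thesis
      unfolding rearr_le_iff[OF g] J count_mult_le_iff[OF b t] using count_mult_le_iff[OF b order.refl]
      by blast
  qed
  then show ?thesis by (metis order.antisym order.refl)
qed

lemma atom_index_down_closed:
  assumes "n \<in> atom_index M \<beta>" "k \<le> n" "0 \<le> \<beta>"
  shows "k \<in> atom_index M \<beta>"
proof -
  have "ennreal (\<beta> * real k) \<le> ennreal (\<beta> * real n)"
    using assms(2,3) by (intro ennreal_leI mult_left_mono) auto
  then show ?thesis using assms(1) unfolding atom_index_def by (auto intro: order.strict_trans1)
qed

lemma emeasure_space_le_notin_atom_index:
  "n \<notin> atom_index M \<beta> \<Longrightarrow> emeasure M (space M) \<le> ennreal (\<beta> * real n)"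
  unfolding atom_index_def by auto

lemma interval_le_emeasure_space:
  assumes ae: "atom_enum M \<beta> e" and n: "n \<in> atom_index M \<beta>"
  shows "ennreal (\<beta> * real (Suc n)) \<le> emeasure M (space M)"
proof -
  have b: "0 < \<beta>" by (rule atom_enumD(1)[OF ae])
  have "{..n} \<subseteq> atom_index M \<beta>" using atom_index_down_closed[OF n] b by auto
  then have "emeasure (count_space UNIV) {..n} \<le> emeasure (count_space UNIV) (atom_index M \<beta>)"
    by (rule emeasure_mono) simp
  then have "ennreal \<beta> * of_nat (Suc n) \<le> ennreal \<beta> * emeasure (count_space UNIV) (atom_index M \<beta>)"
    by (simp add: mult_left_mono)
  also have "\<dots> = emeasure M (space M)"
    using emeasure_UN_atoms[OF ae order.refl] atom_enumD(6)[OF ae] by simp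
  finally show ?thesis using b by (simp add: ennreal_of_nat_eq_real_of_nat ennreal_mult)
qed

lemma
  assumes ae: "atom_enum M \<beta> e"
    and \<Psi>: "\<And>n x. n \<in> atom_index M \<beta> \<Longrightarrow> x \<in> e n \<Longrightarrow> \<Psi> x = a n"
  shows measurable_atomic_step: "\<Psi> \<in> borel_measurable M"
    and distrib_atomic_step:
      "distrib M \<Psi> s = ennreal \<beta> * emeasure (count_space UNIV) {n \<in> atom_index M \<beta>. s < a n}"
proof -
  have level_set: "{x \<in> space M. s < \<Psi> x} = (\<Union>n\<in>{n \<in> atom_index M \<beta>. s < a n}. e n)" for s
  proof -
    have "x \<in> space M \<longleftrightarrow> (\<exists>n \<in> atom_index M \<beta>. x \<in> e n)" for x
      using atom_enumD(6)[OF ae] by blast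
    then show ?thesis using \<Psi> by auto
  qed
  show "\<Psi> \<in> borel_measurable M"
    by (rule borel_measurableI_greater) (simp add: level_set sets_UN_atoms[OF ae])
  show "distrib M \<Psi> s = ennreal \<beta> * emeasure (count_space UNIV) {n \<in> atom_index M \<beta>. s < a n}"
    unfolding distrib_def level_set by (rule emeasure_UN_atoms[OF ae]) auto
qed

lemma rearr_atomic_step:
  assumes ae: "atom_enum M \<beta> e"
    and \<Psi>: "\<And>n x. n \<in> atom_index M \<beta> \<Longrightarrow> x \<in> e n \<Longrightarrow> \<Psi> x = a n"
    and anti: "\<And>i j. i \<le> j \<Longrightarrow> a j \<le> a i"
    and n: "n \<in> atom_index M \<beta>" and t: "\<beta> * real n \<le> t" "t < \<beta> * real (Suc n)"
  shows "rearr M \<Psi> t = a n"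
proof -
  have b: "0 < \<beta>" by (rule atom_enumD(1)[OF ae])
  have "rearr M \<Psi> t \<le> s \<longleftrightarrow> a n \<le> s" for s
  proof -
    let ?J = "{k \<in> atom_index M \<beta>. s < a k}"
    have "i \<in> ?J" if "j \<in> ?J" "i \<le> j" for i j
      using that atom_index_down_closed[of j M \<beta> i] b anti[of i j] by (auto intro: order.strict_trans2)
    then have down: "emeasure (count_space UNIV) ?J \<le> of_nat n \<longleftrightarrow> n \<notin> ?J"
      by (rule count_le_iff_notin_down_closed)
    have "rearr M \<Psi> t \<le> s \<longleftrightarrow> distrib M \<Psi> s \<le> ennreal t"
      by (rule rearr_le_iff[OF measurable_atomic_step[OF ae \<Psi>]])
    also have "distrib M \<Psi> s = ennreal \<beta> * emeasure (count_space UNIV) ?J"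
      by (rule distrib_atomic_step[OF ae \<Psi>])
    also have "ennreal \<beta> * emeasure (count_space UNIV) ?J \<le> ennreal t \<longleftrightarrow>
        emeasure (count_space UNIV) ?J \<le> of_nat n"
      by (rule count_mult_le_iff[OF b t])
    also have "\<dots> \<longleftrightarrow> a n \<le> s" unfolding down using n by auto
    finally show ?thesis .
  qed
  then show ?thesis by (metis order.antisym order.refl)
qed

abbreviation ivl :: "real \<Rightarrow> nat \<Rightarrow> real set" where
  "ivl \<beta> n \<equiv> {\<beta> * real n ..< \<beta> * real (Suc n)}"

definition interval_avg :: "real \<Rightarrow> (real \<Rightarrow> ennreal) \<Rightarrow> nat \<Rightarrow> ennreal" where
  "interval_avg \<beta> G n = ennreal (1 / \<beta>) * (\<integral>\<^sup>+t\<in>ivl \<beta> n. G t \<partial>lebesgue)"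

lemma nn_integral_const_Ico:
  assumes "0 < (\<beta>::real)"
  shows "(\<integral>\<^sup>+t. c * indicator (ivl \<beta> n) t \<partial>lebesgue) = c * ennreal \<beta>"
  using assms by (subst nn_integral_cmult_indicator) (auto simp: algebra_simps)

lemma ennreal_inverse_mult_cancel: "0 < \<beta> \<Longrightarrow> ennreal (1 / \<beta>) * ennreal \<beta> = 1"
  by (simp flip: ennreal_mult)

lemma nn_integral_Ico_eq_avg:
  assumes b: "0 < \<beta>"
  shows "(\<integral>\<^sup>+t\<in>ivl \<beta> n. G t \<partial>lebesgue) = interval_avg \<beta> G n * ennreal \<beta>"
  unfolding interval_avg_def using ennreal_inverse_mult_cancel[OF b]
  by (metis mult.commute mult.left_commute mult_1)

lemma interval_avg_const:
  assumes b: "0 < \<beta>" and G: "\<And>t. t \<in> ivl \<beta> n \<Longrightarrow> G t = c"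
  shows "interval_avg \<beta> G n = c"
proof -
  have "(\<integral>\<^sup>+t\<in>ivl \<beta> n. G t \<partial>lebesgue) =
      (\<integral>\<^sup>+t. c * indicator (ivl \<beta> n) t \<partial>lebesgue)"
    by (rule nn_integral_cong) (simp add: G indicator_def)
  then show ?thesis
    unfolding interval_avg_def nn_integral_const_Ico[OF b] using ennreal_inverse_mult_cancel[OF b]
    by (metis mult.commute mult.left_commute mult_1)
qed

lemma interval_avg_antimono:
  assumes b: "0 < \<beta>" and G: "\<And>x y. x \<le> y \<Longrightarrow> G y \<le> G x" and "i \<le> j"
  shows "interval_avg \<beta> G j \<le> interval_avg \<beta> G i"
proof (cases "i = j")
  case False
  with \<open>i \<le> j\<close> have "\<beta> * real (Suc i) \<le> \<beta> * real j" using b by simp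
  have "(\<integral>\<^sup>+t\<in>ivl \<beta> j. G t \<partial>lebesgue) \<le>
      (\<integral>\<^sup>+t. G (\<beta> * real j) * indicator (ivl \<beta> j) t \<partial>lebesgue)"
    by (rule nn_integral_mono) (auto simp: indicator_def intro: G)
  also have "\<dots> = G (\<beta> * real j) * ennreal \<beta>" by (rule nn_integral_const_Ico[OF b])
  also have "\<dots> \<le> G (\<beta> * real (Suc i)) * ennreal \<beta>"
    using G[OF \<open>\<beta> * real (Suc i) \<le> \<beta> * real j\<close>] by (rule mult_right_mono) simp
  also have "\<dots> = (\<integral>\<^sup>+t. G (\<beta> * real (Suc i)) * indicator (ivl \<beta> i) t \<partial>lebesgue)"
    by (rule nn_integral_const_Ico[OF b, symmetric])
  also have "\<dots> \<le> (\<integral>\<^sup>+t\<in>ivl \<beta> i. G t \<partial>lebesgue)"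
    by (rule nn_integral_mono) (auto simp: indicator_def intro: G)
  finally show ?thesis unfolding interval_avg_def by (rule mult_left_mono) simp
qed simp

lemma nn_integral_Ico_mult_avg:
  assumes b: "0 < \<beta>" and G: "G \<in> borel_measurable lebesgue"
    and F: "\<And>t. t \<in> ivl \<beta> n \<Longrightarrow> F t = c"
  shows "(\<integral>\<^sup>+t\<in>ivl \<beta> n. F t * G t \<partial>lebesgue) =
    (\<integral>\<^sup>+t\<in>ivl \<beta> n. F t * interval_avg \<beta> G n \<partial>lebesgue)"
proof -
  have "(\<integral>\<^sup>+t\<in>ivl \<beta> n. F t * G t \<partial>lebesgue) = (\<integral>\<^sup>+t. c * (G t * indicator (ivl \<beta> n) t) \<partial>lebesgue)"
    by (rule nn_integral_cong) (simp add: F indicator_def)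
  also have "\<dots> = c * (\<integral>\<^sup>+t\<in>ivl \<beta> n. G t \<partial>lebesgue)"
    by (rule nn_integral_cmult) (intro borel_measurable_times_ennreal G borel_measurable_indicator, simp)
  also have "\<dots> = c * (interval_avg \<beta> G n * ennreal \<beta>)"
    by (simp only: nn_integral_Ico_eq_avg[OF b])
  also have "\<dots> = (\<integral>\<^sup>+t. (c * interval_avg \<beta> G n) * indicator (ivl \<beta> n) t \<partial>lebesgue)"
    unfolding nn_integral_const_Ico[OF b] by (simp add: mult.assoc)
  also have "\<dots> = (\<integral>\<^sup>+t\<in>ivl \<beta> n. F t * interval_avg \<beta> G n \<partial>lebesgue)"
    by (rule nn_integral_cong) (simp add: F indicator_def)
  finally show ?thesis .
qed

lemma nn_integral_halfline_eq_suminf: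
  assumes b: "0 < (\<beta>::real)" and F: "F \<in> borel_measurable lebesgue"
  shows "(\<integral>\<^sup>+t. F t \<partial>halfline) = (\<Sum>n. \<integral>\<^sup>+t\<in>ivl \<beta> n. F t \<partial>lebesgue)"
proof -
    have indicator_sum: "indicator {0..} t = (\<Sum>n. indicator (ivl \<beta> n) t :: ennreal)" for t :: real
  proof (cases "0 \<le> t")
    case True
    then obtain n where n: "\<beta> * real n \<le> t" "t < \<beta> * real (Suc n)"
      using exists_interval_index[OF b] by blast
    have "(\<Sum>k. indicator (ivl \<beta> k) t :: ennreal) = (\<Sum>k\<in>{n}. indicator (ivl \<beta> k) t)"
      by (rule suminf_finite) (use interval_index_unique[OF b n] in \<open>auto simp: indicator_def\<close>)
    then show ?thesis using n True by simp
  next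
    case False
    have "t < \<beta> * real k" for k using False mult_nonneg_nonneg[of \<beta> "real k"] b by linarith
    then have "t \<notin> ivl \<beta> k" for k by (simp add: not_le)
    then show ?thesis using False by simp
  qed
  have "(\<integral>\<^sup>+t. F t \<partial>halfline) = (\<integral>\<^sup>+t. F t * indicator {0..} t \<partial>lebesgue)"
    unfolding halfline_def by (rule nn_integral_restrict_space) simp
  also have "\<dots> = (\<integral>\<^sup>+t. (\<Sum>n. F t * indicator (ivl \<beta> n) t) \<partial>lebesgue)"
    unfolding indicator_sum by (simp add: ennreal_suminf_cmult)
  also have "\<dots> = (\<Sum>n. \<integral>\<^sup>+t\<in>ivl \<beta> n. F t \<partial>lebesgue)"
    using F by (intro nn_integral_suminf borel_measurable_times_ennreal borel_measurable_indicator) simp_all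
  finally show ?thesis .
qed

lemma T_op_rearr_trunc:
  assumes ae: "atom_enum M \<beta> e" and n: "n \<in> atom_index M \<beta>" and x: "x \<in> e n"
    and G: "G \<in> borel_measurable halfline"
  shows "T_op M \<beta> e (rearr_trunc M G) x = interval_avg \<beta> (rearr halfline G) n"
proof -
  let ?I = "atom_index M \<beta>"
  let ?H = "rearr (lebesgue_on (range_int M)) (rearr_trunc M G)"
  have "T_op M \<beta> e (rearr_trunc M G) x = (\<Sum>k. (if k \<in> ?I then indicator (e k) x else 0) * interval_avg \<beta> ?H k)"
    unfolding T_op_def interval_avg_def ..
  also have "\<dots> = (\<Sum>k\<in>{n}. (if k \<in> ?I then indicator (e k) x else 0) * interval_avg \<beta> ?H k)"
  proof (rule suminf_finite)
    fix k assume "k \<notin> {n}"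
    then have "x \<notin> e k" if "k \<in> ?I"
      using atom_enumD(5)[OF ae] n x that unfolding disjoint_family_on_def by blast
    then show "(if k \<in> ?I then indicator (e k) x else 0) * interval_avg \<beta> ?H k = 0" by auto
  qed simp
  also have "\<dots> = interval_avg \<beta> ?H n" using n x by simp
  also have "\<dots> = interval_avg \<beta> (rearr halfline G) n"
    unfolding interval_avg_def
  proof (intro arg_cong[where f = "\<lambda>z. ennreal (1 / \<beta>) * z"] nn_integral_cong)
    fix t
    show "?H t * indicator (ivl \<beta> n) t =
        rearr halfline G t * indicator (ivl \<beta> n) t"
    proof (cases "t \<in> ivl \<beta> n")
      case True
      then have "ennreal t < ennreal (\<beta> * real (Suc n))"
        using atom_enumD(1)[OF ae] by (intro ennreal_lessI) auto
      then have "ennreal t < emeasure M (space M)"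
        using interval_le_emeasure_space[OF ae n] by (rule order.strict_trans2)
      then have "?H t = rearr halfline G t"
        by (rule rearr_eq_if_distrib_eq_min[OF borel_measurable_rearr_trunc[OF G] G distrib_rearr_trunc[OF G]])
      then show ?thesis by simp
    qed simp
  qed
  finally show ?thesis .
qed

lemma
  assumes ae: "atom_enum M \<beta> e" and G: "G \<in> borel_measurable halfline"
  shows measurable_T_op_rearr_trunc: "T_op M \<beta> e (rearr_trunc M G) \<in> borel_measurable M"
    and rearr_T_op_rearr_trunc: "n \<in> atom_index M \<beta> \<Longrightarrow> \<beta> * real n \<le> t \<Longrightarrow> t < \<beta> * real (Suc n) \<Longrightarrow>
      rearr M (T_op M \<beta> e (rearr_trunc M G)) t = interval_avg \<beta> (rearr halfline G) n"
proof -
  note step = T_op_rearr_trunc[OF ae _ _ G]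
  show "T_op M \<beta> e (rearr_trunc M G) \<in> borel_measurable M"
    by (rule measurable_atomic_step[OF ae step])
  have anti: "interval_avg \<beta> (rearr halfline G) j \<le> interval_avg \<beta> (rearr halfline G) i"
    if "i \<le> j" for i j
    using atom_enumD(1)[OF ae] rearr_antimono that by (rule interval_avg_antimono)
  show "n \<in> atom_index M \<beta> \<Longrightarrow> \<beta> * real n \<le> t \<Longrightarrow> t < \<beta> * real (Suc n) \<Longrightarrow>
      rearr M (T_op M \<beta> e (rearr_trunc M G)) t = interval_avg \<beta> (rearr halfline G) n"
    by (rule rearr_atomic_step[OF ae step anti])
qed

lemma assoc_norm_atomic:
  assumes ri: "rearr_inv M N" and ae: "atom_enum M \<beta> e" and f: "f \<in> borel_measurable M"
  shows "assoc_norm M N f = assoc_norm halfline (Xbar_atomic M N \<beta> e) (rearr M f)"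
proof (rule assoc_norm_eq_by_transfer[where \<Phi> = "\<lambda>G. T_op M \<beta> e (rearr_trunc M G)", OF ri f])
  have b: "0 < \<beta>" by (rule atom_enumD(1)[OF ae])
  fix G :: "real \<Rightarrow> ennreal"
  assume G: "G \<in> borel_measurable halfline"
  show "T_op M \<beta> e (rearr_trunc M G) \<in> borel_measurable M"
    by (rule measurable_T_op_rearr_trunc[OF ae G])
  show "Xbar_atomic M N \<beta> e G = N (T_op M \<beta> e (rearr_trunc M G))"
    unfolding Xbar_atomic_def rearr_trunc_def ..
  let ?\<Phi> = "T_op M \<beta> e (rearr_trunc M G)"
  have "(\<integral>\<^sup>+t\<in>ivl \<beta> n. rearr M f t * rearr halfline G t \<partial>lebesgue) =
      (\<integral>\<^sup>+t\<in>ivl \<beta> n. rearr M f t * rearr M ?\<Phi> t \<partial>lebesgue)" for n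
  proof (cases "n \<in> atom_index M \<beta>")
    case True
    have "(\<integral>\<^sup>+t\<in>ivl \<beta> n. rearr M f t * rearr halfline G t \<partial>lebesgue) =
        (\<integral>\<^sup>+t\<in>ivl \<beta> n. rearr M f t * interval_avg \<beta> (rearr halfline G) n \<partial>lebesgue)"
      using borel_measurable_rearr_lebesgue[OF G] rearr_atomic_eq_left_endpoint[OF ae f]
      by (intro nn_integral_Ico_mult_avg[OF b]) auto
    also have "\<dots> = (\<integral>\<^sup>+t\<in>ivl \<beta> n. rearr M f t * rearr M ?\<Phi> t \<partial>lebesgue)"
      using rearr_T_op_rearr_trunc[OF ae G True] by (intro nn_integral_cong) (simp add: indicator_def)
    finally show ?thesis .
  next
    case False
    then have "rearr M f t = 0" if "\<beta> * real n \<le> t" for t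
      using emeasure_space_le_notin_atom_index that by (intro rearr_eq_0[OF f]) (fastforce intro: order.trans ennreal_leI)
    then show ?thesis by (intro nn_integral_cong) (simp add: indicator_def)
  qed
  then show "(\<integral>\<^sup>+t. rearr M f t * rearr halfline G t \<partial>halfline) = (\<integral>\<^sup>+t. rearr M f t * rearr M ?\<Phi> t \<partial>halfline)"
    using borel_measurable_rearr_lebesgue[OF f] borel_measurable_rearr_lebesgue[OF G]
      borel_measurable_rearr_lebesgue[OF measurable_T_op_rearr_trunc[OF ae G]]
    by (simp add: nn_integral_halfline_eq_suminf[OF b])
next
  fix g :: "'a \<Rightarrow> ennreal" and t :: real
  assume g: "g \<in> borel_measurable M" and "0 \<le> t"
  have b: "0 < \<beta>" by (rule atom_enumD(1)[OF ae])
  obtain n where n: "\<beta> * real n \<le> t" "t < \<beta> * real (Suc n)"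
    using exists_interval_index[OF b \<open>0 \<le> t\<close>] by blast
  show "rearr M (T_op M \<beta> e (rearr_trunc M (rearr M g))) t = rearr M g t"
  proof (cases "n \<in> atom_index M \<beta>")
    case True
    have "rearr M (T_op M \<beta> e (rearr_trunc M (rearr M g))) t = interval_avg \<beta> (rearr M g) n"
      using rearr_T_op_rearr_trunc[OF ae borel_measurable_rearr_halfline[OF g] True n]
      by (simp add: rearr_rearr[OF g])
    also have "\<dots> = rearr M g (\<beta> * real n)"
      by (rule interval_avg_const[OF b rearr_atomic_eq_left_endpoint[OF ae g]]) auto
    also have "\<dots> = rearr M g t" by (rule rearr_atomic_eq_left_endpoint[OF ae g n, symmetric])
    finally show ?thesis .
  next
    case False
    then have "emeasure M (space M) \<le> ennreal t"
      using emeasure_space_le_notin_atom_index n(1) by (fastforce intro: order.trans ennreal_leI)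
    then show ?thesis
      using rearr_eq_0[OF g] rearr_eq_0[OF measurable_T_op_rearr_trunc[OF ae borel_measurable_rearr_halfline[OF g]]]
      by simp
  qed
qed

theorem mainTheorem5:
  fixes M :: "'a measure" and N :: "('a \<Rightarrow> ennreal) \<Rightarrow> ennreal"
    and Nbar :: "(real \<Rightarrow> ennreal) \<Rightarrow> ennreal"
    and \<sigma> :: "'a \<Rightarrow> real" and \<beta> :: real and e :: "nat \<Rightarrow> 'a set"
    and f :: "'a \<Rightarrow> ennreal"
  assumes "sigma_finite_measure M"
    and "qBFN M N" and "rearr_inv M N" and "P5 M N"
    and "(non_atomic M \<and> meas_pres_onto M \<sigma> \<and> Nbar = Xbar_nonatomic M N \<sigma>) \<or>
         (atom_enum M \<beta> e \<and> Nbar = Xbar_atomic M N \<beta> e)"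
    and "f \<in> borel_measurable M"
  shows "assoc_norm M N f = assoc_norm halfline Nbar (rearr M f)"
  using assms(5) assoc_norm_nonatomic[OF assms(3) _ assms(6)] assoc_norm_atomic[OF assms(3) _ assms(6)]
  by blast

end
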